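(* Let $\mathfrak{s}_{3,-1}\oplus\mathbb{C}$ be the complex Lie algebra with basis $Z_1,Z_2,Z_3,Z_4$ and nonzero brackets $[Z_1,Z_2]=Z_2$, $[Z_1,Z_3]=-Z_3$. A Hermitian inner product $g$ on $\mathfrak{s}_{3,-1}\oplus\mathbb{C}$ induces an expanding algebraic soliton to HCF on the corresponding simply connected complex Lie group if and only if $g(Z_2,\bar Z_3)=g(Z_2,\bar Z_4)=g(Z_3,\bar Z_4)=0$.
   Context: A Hermitian inner product on a complex Lie algebra induces a left-invariant Hermitian metric on the simply connected complex Lie group. The HCF tensor $K(g)$ of such a metric is $K(g)(Z,\bar W)=\mathrm{Ric}^{1,1}(Z,\bar W)+\tfrac12\operatorname{tr}\operatorname{ad}_Z\cdot\overline{\operatorname{tr}\operatorname{ad}_W}$, with $\mathrm{Ric}^{1,1}$ the $(1,1)$-part of the Ricci tensor of the underlying Riemannian metric; $K_g$ is defined by $g(K_gX,\bar Y)=K(g)(X,\bar Y)$. The metric is an expanding algebraic soliton to HCF if $K_g=c\,I+\tfrac12(D+D^t)$ with $c<0$, $D$ a derivation and its $g$-adjoint $D^t$ also a derivation. *)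

theory Defs
  imports "HOL-Analysis.Analysis"
begin

text \<open>The complex Lie algebra s_{3,-1} + C is modelled as complex^4 with the standard basis
  Z1 = axis 1 1, Z2 = axis 2 1, Z3 = axis 3 1, Z4 = axis 4 1 (index type 4; note 4 = 0 there).\<close>

type_synonym alg = "complex ^ 4"

definition Zb :: "4 \<Rightarrow> alg" where "Zb k = axis k 1"

definition lie_br :: "alg \<Rightarrow> alg \<Rightarrow> alg" where
  "lie_br X Y = (\<chi> k. if k = 2 then X$1 * Y$2 - X$2 * Y$1
                      else if k = 3 then - (X$1 * Y$3 - X$3 * Y$1)
                      else 0)"

text \<open>Hermitian inner product: g X Y stands for g(X, conj Y); complex-linear in X,
  conjugate symmetric, positive definite.\<close>
definition herm_ip :: "(alg \<Rightarrow> alg \<Rightarrow> complex) \<Rightarrow> bool" where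
  "herm_ip g \<longleftrightarrow>
     (\<forall>x y z. g (x + y) z = g x z + g y z) \<and>
     (\<forall>a x y. g (a *s x) y = a * g x y) \<and>
     (\<forall>x y. g x y = cnj (g y x)) \<and>
     (\<forall>x. x \<noteq> 0 \<longrightarrow> Re (g x x) > 0)"

definition gR :: "(alg \<Rightarrow> alg \<Rightarrow> complex) \<Rightarrow> alg \<Rightarrow> alg \<Rightarrow> real" where
  "gR g X Y = Re (g X Y)"

definition Jc :: "alg \<Rightarrow> alg" where "Jc X = \<i> *s X"

text \<open>Levi-Civita connection of the left-invariant metric (Koszul formula on left-invariant fields).\<close>
definition lc :: "(alg \<Rightarrow> alg \<Rightarrow> complex) \<Rightarrow> alg \<Rightarrow> alg \<Rightarrow> alg" where
  "lc g X Y = (THE V. \<forall>W. gR g V W =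
      (gR g (lie_br X Y) W - gR g (lie_br Y W) X + gR g (lie_br W X) Y) / 2)"

definition curv :: "(alg \<Rightarrow> alg \<Rightarrow> complex) \<Rightarrow> alg \<Rightarrow> alg \<Rightarrow> alg \<Rightarrow> alg" where
  "curv g X Y Z = lc g X (lc g Y Z) - lc g Y (lc g X Z) - lc g (lie_br X Y) Z"

text \<open>Trace of a real-linear endomorphism of the underlying real vector space (R^8),
  computed in the standard orthonormal real basis.\<close>
definition real_trace :: "(alg \<Rightarrow> alg) \<Rightarrow> real" where
  "real_trace f = (\<Sum>b\<in>Basis. f b \<bullet> b)"

definition Ric :: "(alg \<Rightarrow> alg \<Rightarrow> complex) \<Rightarrow> alg \<Rightarrow> alg \<Rightarrow> real" where
  "Ric g Y Z = real_trace (\<lambda>X. curv g X Y Z)"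

text \<open>(1,1)-part (J-invariant part) of Ric, and the associated sesquilinear form
  Ric11(Z, conj W), with the same convention that turns gR into g:
  g(X, conj Y) = gR X Y + i gR X (J Y).\<close>
definition Ric11 :: "(alg \<Rightarrow> alg \<Rightarrow> complex) \<Rightarrow> alg \<Rightarrow> alg \<Rightarrow> real" where
  "Ric11 g X Y = (Ric g X Y + Ric g (Jc X) (Jc Y)) / 2"

definition Ric11c :: "(alg \<Rightarrow> alg \<Rightarrow> complex) \<Rightarrow> alg \<Rightarrow> alg \<Rightarrow> complex" where
  "Ric11c g X Y = complex_of_real (Ric11 g X Y) + \<i> * complex_of_real (Ric11 g X (Jc Y))"

definition tr_ad :: "alg \<Rightarrow> complex" where
  "tr_ad Z = (\<Sum>k\<in>UNIV. lie_br Z (axis k 1) $ k)"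

definition Khcf :: "(alg \<Rightarrow> alg \<Rightarrow> complex) \<Rightarrow> alg \<Rightarrow> alg \<Rightarrow> complex" where
  "Khcf g Z W = Ric11c g Z W + tr_ad Z * cnj (tr_ad W) / 2"

definition is_derivation :: "complex ^ 4 ^ 4 \<Rightarrow> bool" where
  "is_derivation D \<longleftrightarrow>
     (\<forall>X Y. D *v lie_br X Y = lie_br (D *v X) Y + lie_br X (D *v Y))"

text \<open>Expanding algebraic soliton: K_g = c I + (D + D^t)/2, c < 0, D and its g-adjoint D^t
  derivations; K_g is determined by g(K_g X, conj Y) = K(g)(X, conj Y).\<close>
definition hcf_expanding_soliton :: "(alg \<Rightarrow> alg \<Rightarrow> complex) \<Rightarrow> bool" where
  "hcf_expanding_soliton g \<longleftrightarrow>
     (\<exists>c::real. \<exists>D Dt. c < 0 \<and> is_derivation D \<and> is_derivation Dt \<and>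
        (\<forall>X Y. g (D *v X) Y = g X (Dt *v Y)) \<and>
        (\<forall>X Y. Khcf g X Y =
              g (complex_of_real c *s X + (1/2 :: complex) *s (D *v X + Dt *v X)) Y))"

end

(*
  Gram-Schmidt applied to Z2, Z3, Z4, Z1 yields a g-unitary frame e1, ..., e4 in which the only
  brackets are [e1, x] = M x for x in span(e2, e3, e4), where M is upper triangular with diagonal
  (lam, -lam, 0), lam > 0, and off-diagonal entries al, be, ga; these vanish exactly when Z2, Z3, Z4
  are pairwise g-orthogonal. In this frame the Levi-Civita connection, the curvature and the HCF
  tensor K are explicit (the algebra is unimodular, so K is the (1,1)-part of the Ricci form).

  Every derivation fixes the lines through Z2 and Z3, so g(D e_i, e_j) = 0 for 2 <= i < j <= 4.
  Applied to D and to its adjoint, this makes the soliton equation force K(e_j, e_i) = 0 for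
  these i < j; but K(e4, e2) = -lam be, K(e4, e3) = lam ga - cnj al be and
  K(e3, e2) = -2 lam al + be cnj ga, so al = be = ga = 0. Conversely, if they vanish then
  K(x, y) = -2 lam^2 x1 cnj y1, which is the soliton equation with c = -2 lam^2 and the
  self-adjoint derivation D = 2 lam^2 (projection onto span(e2, e3, e4)).
*)

theory Submission
  imports Defs
begin

datatype coord = Coord (coord1: complex) (coord2: complex) (coord3: complex) (coord4: complex)

instantiation coord :: ab_group_add
begin

definition zero_coord :: coord where "0 = Coord 0 0 0 0"

fun plus_coord :: "coord \<Rightarrow> coord \<Rightarrow> coord" where
  "Coord a b c d + Coord a' b' c' d' = Coord (a + a') (b + b') (c + c') (d + d')"

fun uminus_coord :: "coord \<Rightarrow> coord" where
  "- Coord a b c d = Coord (- a) (- b) (- c) (- d)"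

fun minus_coord :: "coord \<Rightarrow> coord \<Rightarrow> coord" where
  "Coord a b c d - Coord a' b' c' d' = Coord (a - a') (b - b') (c - c') (d - d')"

instance
proof
  fix x y z :: coord
  show "x + y + z = x + (y + z)" by (cases x; cases y; cases z) simp
  show "x + y = y + x" by (cases x; cases y) simp
  show "0 + x = x" by (cases x) (simp add: zero_coord_def)
  show "- x + x = 0" by (cases x) (simp add: zero_coord_def)
  show "x - y = x + - y" by (cases x; cases y) simp
qed

end

declare zero_coord_def [simp]

fun coord_scale :: "complex \<Rightarrow> coord \<Rightarrow> coord" where
  "coord_scale k (Coord a b c d) = Coord (k * a) (k * b) (k * c) (k * d)"

fun coord_inner :: "coord \<Rightarrow> coord \<Rightarrow> complex" where
  "coord_inner (Coord a b c d) (Coord a' b' c' d') = a * cnj a' + b * cnj b' + c * cnj c' + d * cnj d'"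

definition coord_real_trace :: "(coord \<Rightarrow> coord) \<Rightarrow> real" where
  "coord_real_trace h =
     Re (coord1 (h (Coord 1 0 0 0))) + Re (coord2 (h (Coord 0 1 0 0))) +
     Re (coord3 (h (Coord 0 0 1 0))) + Re (coord4 (h (Coord 0 0 0 1))) +
     Im (coord1 (h (Coord \<i> 0 0 0))) + Im (coord2 (h (Coord 0 \<i> 0 0))) +
     Im (coord3 (h (Coord 0 0 \<i> 0))) + Im (coord4 (h (Coord 0 0 0 \<i>)))"

lemma coord_scale_diff: "coord_scale k (x - y) = coord_scale k x - coord_scale k y"
  by (cases x; cases y) (simp add: algebra_simps)

fun ideal_part :: "coord \<Rightarrow> coord" where
  "ideal_part (Coord a b c d) = Coord 0 b c d"

lemma coord_real_basis_expansion:
  "x = coord_scale (Re (coord1 x)) (Coord 1 0 0 0) + coord_scale (Im (coord1 x)) (Coord \<i> 0 0 0) +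
       coord_scale (Re (coord2 x)) (Coord 0 1 0 0) + coord_scale (Im (coord2 x)) (Coord 0 \<i> 0 0) +
       coord_scale (Re (coord3 x)) (Coord 0 0 1 0) + coord_scale (Im (coord3 x)) (Coord 0 0 \<i> 0) +
       coord_scale (Re (coord4 x)) (Coord 0 0 0 1) + coord_scale (Im (coord4 x)) (Coord 0 0 0 \<i>)"
  by (cases x) (simp add: complex_eq_iff)

text \<open>A coordinate vector x stands for x1 e1 + x2 e2 + x3 e3 + x4 e4 in a g-unitary frame adapted
  to s_{3,-1} + C: the only nonzero brackets are [e1, x] = M x for x in span(e2, e3, e4), where
  M = model_ad is upper triangular with diagonal (lam, -lam, 0) and entries al, be, ga above it.\<close>

context
  fixes lam :: real and al be ga :: complex
begin

fun model_ad :: "coord \<Rightarrow> coord" where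
  "model_ad (Coord x1 x2 x3 x4) =
     Coord 0 (of_real lam * x2 + al * x3 + be * x4) (- of_real lam * x3 + ga * x4) 0"

fun model_ad_adj :: "coord \<Rightarrow> coord" where
  "model_ad_adj (Coord x1 x2 x3 x4) =
     Coord 0 (of_real lam * x2) (cnj al * x2 - of_real lam * x3) (cnj be * x2 + cnj ga * x3)"

definition model_bracket :: "coord \<Rightarrow> coord \<Rightarrow> coord" where
  "model_bracket x y = coord_scale (coord1 x) (model_ad y) - coord_scale (coord1 y) (model_ad x)"

text \<open>Levi-Civita connection: nabla_x y = ([x,y] - ad_x^* y - ad_y^* x) / 2, where the adjoint
  of ad_x for the real part of the Hermitian product is
  ad_x^* y = cnj x1 M^* y - <y, M x> e1.\<close>
definition model_lc :: "coord \<Rightarrow> coord \<Rightarrow> coord" where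
  "model_lc x y = coord_scale (1/2)
     (coord_scale (coord1 x) (model_ad y) - coord_scale (cnj (coord1 x)) (model_ad_adj y)
      - coord_scale (coord1 y) (model_ad x) - coord_scale (cnj (coord1 y)) (model_ad_adj x)
      + Coord (coord_inner x (model_ad y) + coord_inner y (model_ad x)) 0 0 0)"

definition model_curv :: "coord \<Rightarrow> coord \<Rightarrow> coord \<Rightarrow> coord" where
  "model_curv x y z =
     model_lc x (model_lc y z) - model_lc y (model_lc x z) - model_lc (model_bracket x y) z"

definition model_ricci :: "coord \<Rightarrow> coord \<Rightarrow> real" where
  "model_ricci y z = coord_real_trace (\<lambda>x. model_curv x y z)"

definition model_ricci11 :: "coord \<Rightarrow> coord \<Rightarrow> real" where
  "model_ricci11 y z = (model_ricci y z + model_ricci (coord_scale \<i> y) (coord_scale \<i> z)) / 2"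

definition model_hcf :: "coord \<Rightarrow> coord \<Rightarrow> complex" where
  "model_hcf y z = of_real (model_ricci11 y z) + \<i> * of_real (model_ricci11 y (coord_scale \<i> z))"

lemma model_koszul:
  "Re (coord_inner (model_lc x y) w) =
     (Re (coord_inner (model_bracket x y) w) - Re (coord_inner (model_bracket y w) x)
      + Re (coord_inner (model_bracket w x) y)) / 2"
  by (cases x; cases y; cases w) (simp add: model_lc_def model_bracket_def field_simps)

lemma model_bracket_add_left:
  "model_bracket (x + x') y = model_bracket x y + model_bracket x' y"
  by (cases x; cases x'; cases y) (simp add: model_bracket_def algebra_simps)

lemma model_bracket_scale_left:
  "model_bracket (coord_scale (of_real r) x) y = coord_scale (of_real r) (model_bracket x y)"
  by (cases x; cases y) (simp add: model_bracket_def algebra_simps)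

lemma model_lc_add_left: "model_lc (x + x') y = model_lc x y + model_lc x' y"
  by (cases x; cases x'; cases y) (simp add: model_lc_def algebra_simps)

lemma model_lc_add_right: "model_lc y (x + x') = model_lc y x + model_lc y x'"
  by (cases x; cases x'; cases y) (simp add: model_lc_def algebra_simps)

lemma model_lc_scale_left:
  "model_lc (coord_scale (of_real r) x) y = coord_scale (of_real r) (model_lc x y)"
  by (cases x; cases y) (simp add: model_lc_def algebra_simps)

lemma model_lc_scale_right:
  "model_lc y (coord_scale (of_real r) x) = coord_scale (of_real r) (model_lc y x)"
  by (cases x; cases y) (simp add: model_lc_def algebra_simps)

lemma model_curv_add_left:
  "model_curv (x + x') y z = model_curv x y z + model_curv x' y z"
  by (simp add: model_curv_def model_lc_add_left model_lc_add_right model_bracket_add_left)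

lemma model_curv_scale_left:
  "model_curv (coord_scale (of_real r) x) y z = coord_scale (of_real r) (model_curv x y z)"
  by (simp add: model_curv_def model_lc_scale_left model_lc_scale_right model_bracket_scale_left
      coord_scale_diff)

lemma model_bracket_scaled_ideal_part:
  "coord_scale k (ideal_part (model_bracket x y)) =
     model_bracket (coord_scale k (ideal_part x)) y + model_bracket x (coord_scale k (ideal_part y))"
  by (cases x; cases y) (simp add: model_bracket_def algebra_simps)

lemmas model_hcf_unfold = model_hcf_def model_ricci11_def model_ricci_def coord_real_trace_def
  model_curv_def model_lc_def model_bracket_def

end

lemma model_hcf_diagonal:
  "model_hcf lam 0 0 0 y z = - 2 * of_real (lam\<^sup>2) * coord1 y * cnj (coord1 z)"
  by (cases y; cases z) (simp add: model_hcf_unfold field_simps complex_eq_iff power2_eq_square)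

lemma model_hcf_42:
  "model_hcf lam al be ga (Coord 0 0 0 1) (Coord 0 1 0 0) = - of_real lam * be"
  by (simp add: model_hcf_unfold field_simps complex_eq_iff)

lemma model_hcf_43:
  "model_hcf lam al be ga (Coord 0 0 0 1) (Coord 0 0 1 0) = of_real lam * ga - cnj al * be"
  by (simp add: model_hcf_unfold field_simps complex_eq_iff)

lemma model_hcf_32:
  "model_hcf lam al be ga (Coord 0 0 1 0) (Coord 0 1 0 0) = - 2 * of_real lam * al + be * cnj ga"
  by (simp add: model_hcf_unfold field_simps complex_eq_iff)

lemma scaleR_eq_scale_of_real: "r *\<^sub>R (x :: complex ^ 'n) = complex_of_real r *s x"
  by (simp add: vec_eq_iff scaleR_conv_of_real[where 'a=complex])

lemma real_trace_add: "real_trace (\<lambda>X. f X + h X) = real_trace f + real_trace h"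
  unfolding real_trace_def inner_add_left by (rule sum.distrib)

lemma real_trace_rank_one:
  assumes "linear \<phi>"
  shows "real_trace (\<lambda>X. \<phi> X *\<^sub>R v) = \<phi> v"
proof -
  have "\<phi> v = \<phi> (\<Sum>b\<in>Basis. (v \<bullet> b) *\<^sub>R b)"
    by (simp only: euclidean_representation)
  also have "\<dots> = (\<Sum>b\<in>Basis. \<phi> b * (v \<bullet> b))"
    by (simp add: linear_sum[OF assms] linear_cmul[OF assms] mult.commute)
  finally show ?thesis
    by (simp add: real_trace_def)
qed

lemma tr_ad_eq_0: "tr_ad X = 0"
  by (simp add: tr_ad_def sum_4 lie_br_def axis_def)

locale hermitian_form =
  fixes g :: "alg \<Rightarrow> alg \<Rightarrow> complex"
  assumes herm_ip: "herm_ip g"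
begin

lemma add_left: "g (x + y) z = g x z + g y z"
  and scale_left: "g (a *s x) y = a * g x y"
  and conj_sym: "g x y = cnj (g y x)"
  and pos: "x \<noteq> 0 \<Longrightarrow> Re (g x x) > 0"
  using herm_ip unfolding herm_ip_def by blast+

lemma add_right: "g x (y + z) = g x y + g x z"
  by (subst (1 2 3) conj_sym) (simp add: add_left)

lemma scale_right: "g x (a *s y) = cnj a * g x y"
  by (subst (1 2) conj_sym) (simp add: scale_left)

lemma minus_left: "g (- x) y = - g x y"
  by (simp only: vector_sneg_minus1[of x] scale_left) simp

lemma minus_right: "g x (- y) = - g x y"
  by (simp only: vector_sneg_minus1[of y] scale_right) simp

lemma diff_left: "g (x - y) z = g x z - g y z"
  using add_left[of x "- y" z] minus_left[of y z] by simp

lemma diff_right: "g x (y - z) = g x y - g x z"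
  using add_right[of x y "- z"] minus_right[of x z] by simp

lemma zero_left [simp]: "g 0 y = 0"
  using scale_left[of 0 0 y] by simp

lemma zero_right [simp]: "g y 0 = 0"
  using scale_right[of y 0 0] by simp

lemmas sesqui_simps =
  add_left add_right scale_left scale_right diff_left diff_right minus_left minus_right

lemma real_diag: "g x x = Re (g x x)"
proof -
  have "Im (g x x) = - Im (g x x)"
    using arg_cong[OF conj_sym[of x x], of Im] by simp
  then show ?thesis by (simp add: complex_eq_iff)
qed

lemma eq_if_Re_eq:
  assumes "\<And>w. Re (g v w) = Re (g v' w)"
  shows "v = v'"
  using assms[of "v - v'"] pos[of "v - v'"] by (auto simp: diff_left)

lemma linear_Re_left: "linear (\<lambda>x. Re (g x e))"
  by (rule linearI) (simp_all add: add_left scaleR_eq_scale_of_real scale_left)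

lemma linear_Im_left: "linear (\<lambda>x. Im (g x e))"
  by (rule linearI) (simp_all add: add_left scaleR_eq_scale_of_real scale_left)

end

definition frame_map :: "alg \<Rightarrow> alg \<Rightarrow> alg \<Rightarrow> alg \<Rightarrow> coord \<Rightarrow> alg" where
  "frame_map e1 e2 e3 e4 x = coord1 x *s e1 + coord2 x *s e2 + coord3 x *s e3 + coord4 x *s e4"

locale adapted_frame = hermitian_form +
  fixes e1 e2 e3 e4 :: alg and lam :: real and al be ga :: complex
  assumes orthonormal:
      "g e1 e1 = 1" "g e2 e2 = 1" "g e3 e3 = 1" "g e4 e4 = 1"
      "g e1 e2 = 0" "g e1 e3 = 0" "g e1 e4 = 0" "g e2 e3 = 0" "g e2 e4 = 0" "g e3 e4 = 0"
    and expansion: "X = g X e1 *s e1 + g X e2 *s e2 + g X e3 *s e3 + g X e4 *s e4"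
    and bracket_frame_map: "lie_br (frame_map e1 e2 e3 e4 x) (frame_map e1 e2 e3 e4 y) =
      frame_map e1 e2 e3 e4 (model_bracket lam al be ga x y)"
begin

abbreviation \<Phi> :: "coord \<Rightarrow> alg" where "\<Phi> \<equiv> frame_map e1 e2 e3 e4"

definition frame_coord :: "alg \<Rightarrow> coord" where
  "frame_coord X = Coord (g X e1) (g X e2) (g X e3) (g X e4)"

lemma orthonormal_sym:
  "g e2 e1 = 0" "g e3 e1 = 0" "g e4 e1 = 0" "g e3 e2 = 0" "g e4 e2 = 0" "g e4 e3 = 0"
  using orthonormal conj_sym by (metis complex_cnj_zero)+

lemmas orthonormal_all = orthonormal orthonormal_sym

lemma frame_map_coord: "\<Phi> (frame_coord X) = X"
  using expansion[of X] by (simp add: frame_map_def frame_coord_def)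

lemma frame_map_surj: obtains x where "X = \<Phi> x"
  using frame_map_coord by metis

lemma inner_frame_map_basis:
  "g (\<Phi> x) e1 = coord1 x" "g (\<Phi> x) e2 = coord2 x" "g (\<Phi> x) e3 = coord3 x" "g (\<Phi> x) e4 = coord4 x"
  by (simp_all add: frame_map_def sesqui_simps orthonormal_all)

lemma frame_coord_map: "frame_coord (\<Phi> x) = x"
  by (cases x) (simp add: frame_coord_def inner_frame_map_basis)

lemma inner_frame_map: "g (\<Phi> x) (\<Phi> y) = coord_inner x y"
  by (cases x; cases y) (simp add: frame_map_def sesqui_simps orthonormal_all algebra_simps)

lemma frame_map_add: "\<Phi> (x + y) = \<Phi> x + \<Phi> y"
  by (cases x; cases y) (simp add: frame_map_def vector_sadd_rdistrib algebra_simps)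

lemma frame_map_diff: "\<Phi> (x - y) = \<Phi> x - \<Phi> y"
  by (cases x; cases y) (simp add: frame_map_def vector_sub_rdistrib algebra_simps)

lemma frame_map_scale: "\<Phi> (coord_scale k x) = k *s \<Phi> x"
  by (cases x) (simp add: frame_map_def vector_add_ldistrib vector_smult_assoc)

lemma lc_frame_map: "lc g (\<Phi> x) (\<Phi> y) = \<Phi> (model_lc lam al be ga x y)"
  unfolding lc_def
proof (rule the_equality)
  let ?koszul = "\<lambda>W. (gR g (lie_br (\<Phi> x) (\<Phi> y)) W - gR g (lie_br (\<Phi> y) W) (\<Phi> x)
    + gR g (lie_br W (\<Phi> x)) (\<Phi> y)) / 2"
  have koszul: "gR g (\<Phi> (model_lc lam al be ga x y)) W = ?koszul W" for W
  proof -
    obtain w where "W = \<Phi> w"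
      by (rule frame_map_surj)
    then show ?thesis
      by (simp add: gR_def bracket_frame_map inner_frame_map model_koszul)
  qed
  then show "\<forall>W. gR g (\<Phi> (model_lc lam al be ga x y)) W = ?koszul W"
    by blast
  fix V
  assume "\<forall>W. gR g V W = ?koszul W"
  with koszul show "V = \<Phi> (model_lc lam al be ga x y)"
    unfolding gR_def by (intro eq_if_Re_eq) metis
qed

lemma curv_frame_map: "curv g (\<Phi> x) (\<Phi> y) (\<Phi> z) = \<Phi> (model_curv lam al be ga x y z)"
  by (simp add: curv_def model_curv_def lc_frame_map bracket_frame_map frame_map_diff)

lemma real_trace_frame_map:
  assumes add: "\<And>x y. h (x + y) = h x + h y"
    and scale: "\<And>r x. h (coord_scale (of_real r) x) = coord_scale (of_real r) (h x)"
  shows "real_trace (\<lambda>X. \<Phi> (h (frame_coord X))) = coord_real_trace h"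
proof -
  have expand: "\<Phi> (h (frame_coord X)) =
      Re (g X e1) *\<^sub>R \<Phi> (h (Coord 1 0 0 0)) + Im (g X e1) *\<^sub>R \<Phi> (h (Coord \<i> 0 0 0)) +
      Re (g X e2) *\<^sub>R \<Phi> (h (Coord 0 1 0 0)) + Im (g X e2) *\<^sub>R \<Phi> (h (Coord 0 \<i> 0 0)) +
      Re (g X e3) *\<^sub>R \<Phi> (h (Coord 0 0 1 0)) + Im (g X e3) *\<^sub>R \<Phi> (h (Coord 0 0 \<i> 0)) +
      Re (g X e4) *\<^sub>R \<Phi> (h (Coord 0 0 0 1)) + Im (g X e4) *\<^sub>R \<Phi> (h (Coord 0 0 0 \<i>))" for X
    by (subst coord_real_basis_expansion[of "frame_coord X"])
      (simp only: add scale frame_map_add frame_map_scale scaleR_eq_scale_of_real, simp add: frame_coord_def)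
  show ?thesis
    unfolding expand real_trace_add
    by (simp add: real_trace_rank_one linear_Re_left linear_Im_left inner_frame_map_basis coord_real_trace_def)
qed

lemma Ric_frame_map: "Ric g (\<Phi> y) (\<Phi> z) = model_ricci lam al be ga y z"
proof -
  have "Ric g (\<Phi> y) (\<Phi> z) = real_trace (\<lambda>X. \<Phi> (model_curv lam al be ga (frame_coord X) y z))"
    unfolding Ric_def by (metis curv_frame_map frame_map_coord)
  also have "\<dots> = model_ricci lam al be ga y z"
    unfolding model_ricci_def
    by (rule real_trace_frame_map) (simp_all add: model_curv_add_left model_curv_scale_left)
  finally show ?thesis .
qed

lemma Jc_frame_map: "Jc (\<Phi> x) = \<Phi> (coord_scale \<i> x)"
  by (simp add: Jc_def frame_map_scale)

lemma Khcf_frame_map: "Khcf g (\<Phi> x) (\<Phi> y) = model_hcf lam al be ga x y"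
  by (simp add: Khcf_def tr_ad_eq_0 Ric11c_def Ric11_def Jc_frame_map Ric_frame_map
      model_hcf_def model_ricci11_def)

lemma frame_map_basis:
  "\<Phi> (Coord 1 0 0 0) = e1" "\<Phi> (Coord 0 1 0 0) = e2" "\<Phi> (Coord 0 0 1 0) = e3" "\<Phi> (Coord 0 0 0 1) = e4"
  by (simp_all add: frame_map_def)

lemma Khcf_frame_basis:
  "Khcf g e4 e2 = - of_real lam * be"
  "Khcf g e4 e3 = of_real lam * ga - cnj al * be"
  "Khcf g e3 e2 = - 2 * of_real lam * al + be * cnj ga"
  using Khcf_frame_map[of "Coord 0 0 0 1" "Coord 0 1 0 0"] Khcf_frame_map[of "Coord 0 0 0 1" "Coord 0 0 1 0"]
    Khcf_frame_map[of "Coord 0 0 1 0" "Coord 0 1 0 0"]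
  by (simp_all only: frame_map_basis model_hcf_42 model_hcf_43 model_hcf_32)

text \<open>X - g X e1 *s e1 is the projection onto span(e2, e3, e4), an abelian ideal containing
  all brackets; hence every multiple of it is a derivation.\<close>
definition scaled_ideal_projection :: "real \<Rightarrow> complex^4^4" where
  "scaled_ideal_projection k = matrix (\<lambda>X. complex_of_real k *s (X - g X e1 *s e1))"

lemma scaled_ideal_projection_frame_map:
  "scaled_ideal_projection k *v \<Phi> x = \<Phi> (coord_scale k (ideal_part x))"
proof -
  have "Vector_Spaces.linear (*s) (*s) (\<lambda>X. complex_of_real k *s (X - g X e1 *s e1))"
    by (simp add: Vector_Spaces.linear_iff vec.vector_space_axioms add_left scale_left
        vector_ssub_ldistrib vector_add_ldistrib vector_smult_assoc algebra_simps)
  then have "scaled_ideal_projection k *v \<Phi> x = complex_of_real k *s (\<Phi> x - coord1 x *s e1)"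
    unfolding scaled_ideal_projection_def by (simp add: matrix_works inner_frame_map_basis)
  also have "\<Phi> x - coord1 x *s e1 = \<Phi> (ideal_part x)"
    by (cases x) (simp add: frame_map_def)
  finally show ?thesis
    by (simp only: frame_map_scale)
qed

lemma is_derivation_scaled_ideal_projection: "is_derivation (scaled_ideal_projection k)"
  unfolding is_derivation_def
proof (intro allI)
  fix X Y
  obtain x y where "X = \<Phi> x" "Y = \<Phi> y"
    by (metis frame_map_surj)
  then show "scaled_ideal_projection k *v lie_br X Y =
      lie_br (scaled_ideal_projection k *v X) Y + lie_br X (scaled_ideal_projection k *v Y)"
    by (simp add: scaled_ideal_projection_frame_map bracket_frame_map model_bracket_scaled_ideal_part
        frame_map_add)
qed

lemma scaled_ideal_projection_self_adjoint:
  "g (scaled_ideal_projection k *v X) Y = g X (scaled_ideal_projection k *v Y)"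
proof -
  obtain x y where "X = \<Phi> x" "Y = \<Phi> y"
    by (metis frame_map_surj)
  then show ?thesis
    by (cases x; cases y) (simp add: scaled_ideal_projection_frame_map inner_frame_map)
qed

lemma diagonal_frame_soliton:
  assumes "lam \<noteq> 0" "al = 0" "be = 0" "ga = 0"
  shows "hcf_expanding_soliton g"
proof -
  define k where "k = 2 * lam\<^sup>2"
  define D where "D = scaled_ideal_projection k"
  have "Khcf g X Y = g (complex_of_real (- k) *s X + (1/2 :: complex) *s (D *v X + D *v X)) Y" for X Y
  proof -
    obtain x y where xy: "X = \<Phi> x" "Y = \<Phi> y"
      by (metis frame_map_surj)
    define x' where "x' = coord_scale k (ideal_part x)"
    have "model_hcf lam 0 0 0 x y = coord_inner (coord_scale (- k) x + coord_scale (1/2) (x' + x')) y"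
      by (cases x; cases y) (simp add: model_hcf_diagonal x'_def k_def algebra_simps)
    then show ?thesis
      using assms unfolding xy D_def
      by (simp add: Khcf_frame_map scaled_ideal_projection_frame_map inner_frame_map x'_def
          flip: frame_map_scale frame_map_add)
  qed
  moreover have "- k < 0"
    using assms(1) by (simp add: k_def)
  ultimately show ?thesis
    unfolding hcf_expanding_soliton_def D_def
    using is_derivation_scaled_ideal_projection scaled_ideal_projection_self_adjoint by blast
qed

end

lemma vec4_expansion: "X = X$1 *s Zb 1 + X$2 *s Zb 2 + X$3 *s Zb 3 + X$4 *s Zb 4"
  by (simp add: vec_eq_iff forall_4 Zb_def axis_def)

lemma Zb_nonzero: "Zb k \<noteq> 0"
  by (simp add: Zb_def)

lemma bracket_triangular_frame:
  fixes n1 n2 n3 n4 :: real and t u v p q r :: complex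
  assumes n: "n1 > 0" "n2 > 0" "n3 > 0" "n4 > 0"
    and e: "e2 = complex_of_real (1/n2) *s Zb 2"
      "e3 = complex_of_real (1/n3) *s (Zb 3 - t *s e2)"
      "e4 = complex_of_real (1/n4) *s (Zb 4 - u *s e2 - v *s e3)"
      "e1 = complex_of_real (1/n1) *s (Zb 1 - p *s e2 - q *s e3 - r *s e4)"
  shows "lie_br (frame_map e1 e2 e3 e4 x) (frame_map e1 e2 e3 e4 y) =
    frame_map e1 e2 e3 e4 (model_bracket (1/n1)
      (- 2 * complex_of_real (1/n1) * t / complex_of_real n3)
      (complex_of_real (1/n1) * (- u + 2 * v * t / complex_of_real n3) / complex_of_real n4)
      (complex_of_real (1/n1) * v / complex_of_real n4) x y)"
  using n by (cases x; cases y)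
    (simp add: frame_map_def vec_eq_iff forall_4 lie_br_def model_bracket_def Zb_def axis_def e,
     simp add: field_simps)

definition g_norm :: "(alg \<Rightarrow> alg \<Rightarrow> complex) \<Rightarrow> alg \<Rightarrow> real" where
  "g_norm g w = sqrt (Re (g w w))"

definition g_unit :: "(alg \<Rightarrow> alg \<Rightarrow> complex) \<Rightarrow> alg \<Rightarrow> alg" where
  "g_unit g w = complex_of_real (1 / g_norm g w) *s w"

text \<open>Gram-Schmidt in the order Z2, Z3, Z4, Z1: the flag Z2 \<subseteq> Z2,Z3 \<subseteq> Z2,Z3,Z4 consists of
  ideals, so ad_{e1} is upper triangular on the span of e2, e3, e4.\<close>

definition gs_e2 :: "(alg \<Rightarrow> alg \<Rightarrow> complex) \<Rightarrow> alg" where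
  "gs_e2 g = g_unit g (Zb 2)"
definition gs_r3 :: "(alg \<Rightarrow> alg \<Rightarrow> complex) \<Rightarrow> alg" where
  "gs_r3 g = Zb 3 - g (Zb 3) (gs_e2 g) *s gs_e2 g"
definition gs_e3 :: "(alg \<Rightarrow> alg \<Rightarrow> complex) \<Rightarrow> alg" where
  "gs_e3 g = g_unit g (gs_r3 g)"
definition gs_r4 :: "(alg \<Rightarrow> alg \<Rightarrow> complex) \<Rightarrow> alg" where
  "gs_r4 g = Zb 4 - g (Zb 4) (gs_e2 g) *s gs_e2 g - g (Zb 4) (gs_e3 g) *s gs_e3 g"
definition gs_e4 :: "(alg \<Rightarrow> alg \<Rightarrow> complex) \<Rightarrow> alg" where
  "gs_e4 g = g_unit g (gs_r4 g)"
definition gs_r1 :: "(alg \<Rightarrow> alg \<Rightarrow> complex) \<Rightarrow> alg" where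
  "gs_r1 g =
     Zb 1 - g (Zb 1) (gs_e2 g) *s gs_e2 g - g (Zb 1) (gs_e3 g) *s gs_e3 g - g (Zb 1) (gs_e4 g) *s gs_e4 g"
definition gs_e1 :: "(alg \<Rightarrow> alg \<Rightarrow> complex) \<Rightarrow> alg" where
  "gs_e1 g = g_unit g (gs_r1 g)"

definition gs_lam :: "(alg \<Rightarrow> alg \<Rightarrow> complex) \<Rightarrow> real" where
  "gs_lam g = 1 / g_norm g (gs_r1 g)"
definition gs_alpha :: "(alg \<Rightarrow> alg \<Rightarrow> complex) \<Rightarrow> complex" where
  "gs_alpha g =
     - 2 * complex_of_real (gs_lam g) * g (Zb 3) (gs_e2 g) / complex_of_real (g_norm g (gs_r3 g))"
definition gs_beta :: "(alg \<Rightarrow> alg \<Rightarrow> complex) \<Rightarrow> complex" where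
  "gs_beta g = complex_of_real (gs_lam g) *
     (- g (Zb 4) (gs_e2 g) + 2 * g (Zb 4) (gs_e3 g) * g (Zb 3) (gs_e2 g) / complex_of_real (g_norm g (gs_r3 g)))
     / complex_of_real (g_norm g (gs_r4 g))"
definition gs_gamma :: "(alg \<Rightarrow> alg \<Rightarrow> complex) \<Rightarrow> complex" where
  "gs_gamma g =
     complex_of_real (gs_lam g) * g (Zb 4) (gs_e3 g) / complex_of_real (g_norm g (gs_r4 g))"

lemma gs_residual_nonzero: "gs_r3 g \<noteq> 0" "gs_r4 g \<noteq> 0" "gs_r1 g \<noteq> 0"
proof -
  have "gs_e2 g $ 1 = 0" "gs_e2 g $ 3 = 0" "gs_e2 g $ 4 = 0" "gs_e3 g $ 1 = 0" "gs_e3 g $ 4 = 0"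
    "gs_e4 g $ 1 = 0"
    by (simp_all add: gs_e2_def gs_e3_def gs_e4_def gs_r3_def gs_r4_def g_unit_def Zb_def axis_def)
  then have "gs_r3 g $ 3 = 1" "gs_r4 g $ 4 = 1" "gs_r1 g $ 1 = 1"
    by (simp_all add: gs_r3_def gs_r4_def gs_r1_def Zb_def axis_def)
  then show "gs_r3 g \<noteq> 0" "gs_r4 g \<noteq> 0" "gs_r1 g \<noteq> 0"
    by auto
qed

lemma derivation_eigenvectors:
  assumes "is_derivation D"
  shows "D *v Zb 2 = D$2$2 *s Zb 2" "D *v Zb 3 = D$3$3 *s Zb 3"
proof -
  have "(D *v lie_br (Zb 1) (Zb j)) $ i = (lie_br (D *v Zb 1) (Zb j) + lie_br (Zb 1) (D *v Zb j)) $ i"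
    for j i
    using assms by (simp add: is_derivation_def)
  note entries = this[unfolded matrix_vector_mult_def sum_4 lie_br_def Zb_def axis_def]
  have "D$1$2 = 0" "D$3$2 = 0" "D$4$2 = 0" "D$1$3 = 0" "D$2$3 = 0" "D$4$3 = 0"
    using entries[of 2 1] entries[of 2 3] entries[of 2 4] entries[of 3 1] entries[of 3 2] entries[of 3 4]
    by simp_all
  then show "D *v Zb 2 = D$2$2 *s Zb 2" "D *v Zb 3 = D$3$3 *s Zb 3"
    by (simp_all add: vec_eq_iff forall_4 matrix_vector_mult_def sum_4 Zb_def axis_def)
qed

context hermitian_form
begin

lemma g_norm_pos: "w \<noteq> 0 \<Longrightarrow> g_norm g w > 0"
  by (simp add: g_norm_def pos)

lemma g_unit_left: "g (g_unit g w) v = complex_of_real (1 / g_norm g w) * g w v"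
  by (simp add: g_unit_def scale_left)

lemma g_unit_unit:
  assumes "w \<noteq> 0"
  shows "g (g_unit g w) (g_unit g w) = 1"
proof -
  have "g w w = complex_of_real ((g_norm g w)\<^sup>2)"
    using real_diag[of w] pos[OF assms] by (simp add: g_norm_def)
  then show ?thesis
    using g_norm_pos[OF assms] by (simp add: g_unit_def scale_left scale_right power2_eq_square)
qed

lemma g_unit_scale: "w \<noteq> 0 \<Longrightarrow> w = complex_of_real (g_norm g w) *s g_unit g w"
  using g_norm_pos[of w] by (simp add: g_unit_def vector_smult_assoc)

lemma gs_orthonormal:
  "g (gs_e1 g) (gs_e1 g) = 1" "g (gs_e2 g) (gs_e2 g) = 1"
  "g (gs_e3 g) (gs_e3 g) = 1" "g (gs_e4 g) (gs_e4 g) = 1"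
  "g (gs_e1 g) (gs_e2 g) = 0" "g (gs_e1 g) (gs_e3 g) = 0" "g (gs_e1 g) (gs_e4 g) = 0"
  "g (gs_e2 g) (gs_e3 g) = 0" "g (gs_e2 g) (gs_e4 g) = 0" "g (gs_e3 g) (gs_e4 g) = 0"
proof -
  show "g (gs_e1 g) (gs_e1 g) = 1" and 22: "g (gs_e2 g) (gs_e2 g) = 1"
    and 33: "g (gs_e3 g) (gs_e3 g) = 1" and 44: "g (gs_e4 g) (gs_e4 g) = 1"
    by (simp_all add: gs_e1_def gs_e2_def gs_e3_def gs_e4_def g_unit_unit Zb_nonzero gs_residual_nonzero)
  have 32: "g (gs_e3 g) (gs_e2 g) = 0"
    by (simp add: gs_e3_def g_unit_left gs_r3_def sesqui_simps 22)
  then show 23: "g (gs_e2 g) (gs_e3 g) = 0"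
    using conj_sym[of "gs_e2 g" "gs_e3 g"] by simp
  have 42: "g (gs_e4 g) (gs_e2 g) = 0" and 43: "g (gs_e4 g) (gs_e3 g) = 0"
    by (simp_all add: gs_e4_def g_unit_left gs_r4_def sesqui_simps 22 33 32 23)
  then show 24: "g (gs_e2 g) (gs_e4 g) = 0" and 34: "g (gs_e3 g) (gs_e4 g) = 0"
    using conj_sym[of "gs_e2 g" "gs_e4 g"] conj_sym[of "gs_e3 g" "gs_e4 g"] by simp_all
  show "g (gs_e1 g) (gs_e2 g) = 0" "g (gs_e1 g) (gs_e3 g) = 0" "g (gs_e1 g) (gs_e4 g) = 0"
    by (simp_all add: gs_e1_def g_unit_left gs_r1_def sesqui_simps 22 33 44 23 32 42 43 24 34)
qed

lemma gs_residual_scale: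
  "gs_r1 g = complex_of_real (g_norm g (gs_r1 g)) *s gs_e1 g"
  "Zb 2 = complex_of_real (g_norm g (Zb 2)) *s gs_e2 g"
  "gs_r3 g = complex_of_real (g_norm g (gs_r3 g)) *s gs_e3 g"
  "gs_r4 g = complex_of_real (g_norm g (gs_r4 g)) *s gs_e4 g"
  unfolding gs_e1_def gs_e2_def gs_e3_def gs_e4_def
  by (intro g_unit_scale Zb_nonzero gs_residual_nonzero)+

lemma Zb_in_gs_frame:
  "Zb 1 = complex_of_real (g_norm g (gs_r1 g)) *s gs_e1 g + g (Zb 1) (gs_e2 g) *s gs_e2 g
     + g (Zb 1) (gs_e3 g) *s gs_e3 g + g (Zb 1) (gs_e4 g) *s gs_e4 g"
  "Zb 2 = complex_of_real (g_norm g (Zb 2)) *s gs_e2 g"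
  "Zb 3 = g (Zb 3) (gs_e2 g) *s gs_e2 g + complex_of_real (g_norm g (gs_r3 g)) *s gs_e3 g"
  "Zb 4 = g (Zb 4) (gs_e2 g) *s gs_e2 g + g (Zb 4) (gs_e3 g) *s gs_e3 g
     + complex_of_real (g_norm g (gs_r4 g)) *s gs_e4 g"
  using gs_residual_scale unfolding gs_r1_def gs_r3_def gs_r4_def by (simp_all add: algebra_simps)

lemma gs_expansion:
  "X = g X (gs_e1 g) *s gs_e1 g + g X (gs_e2 g) *s gs_e2 g
     + g X (gs_e3 g) *s gs_e3 g + g X (gs_e4 g) *s gs_e4 g"
proof -
  define P where "P X = g X (gs_e1 g) *s gs_e1 g + g X (gs_e2 g) *s gs_e2 g
    + g X (gs_e3 g) *s gs_e3 g + g X (gs_e4 g) *s gs_e4 g" for X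
  have P_add: "P (X + Y) = P X + P Y" for X Y
    by (simp add: P_def add_left vector_sadd_rdistrib algebra_simps)
  have P_scale: "P (c *s X) = c *s P X" for c X
    by (simp add: P_def scale_left vector_add_ldistrib vector_smult_assoc)
  have orth_sym: "g (gs_e2 g) (gs_e1 g) = 0" "g (gs_e3 g) (gs_e1 g) = 0" "g (gs_e4 g) (gs_e1 g) = 0"
    "g (gs_e3 g) (gs_e2 g) = 0" "g (gs_e4 g) (gs_e2 g) = 0" "g (gs_e4 g) (gs_e3 g) = 0"
    using gs_orthonormal conj_sym by (metis complex_cnj_zero)+
  have P_e: "P (gs_e1 g) = gs_e1 g" "P (gs_e2 g) = gs_e2 g" "P (gs_e3 g) = gs_e3 g" "P (gs_e4 g) = gs_e4 g"
    by (simp_all add: P_def gs_orthonormal orth_sym)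
  have "\<forall>k. P (Zb k) = Zb k"
    unfolding forall_4
    by (intro conjI; subst (1 2) Zb_in_gs_frame; simp only: P_add P_scale P_e)
  then have "P X = X"
    by (subst (1 2) vec4_expansion) (simp only: P_add P_scale)
  then show ?thesis
    by (simp add: P_def)
qed

lemma gs_adapted_frame:
  "adapted_frame g (gs_e1 g) (gs_e2 g) (gs_e3 g) (gs_e4 g)
     (gs_lam g) (gs_alpha g) (gs_beta g) (gs_gamma g)"
proof (unfold_locales)
  show "lie_br (frame_map (gs_e1 g) (gs_e2 g) (gs_e3 g) (gs_e4 g) x)
      (frame_map (gs_e1 g) (gs_e2 g) (gs_e3 g) (gs_e4 g) y) =
    frame_map (gs_e1 g) (gs_e2 g) (gs_e3 g) (gs_e4 g)
      (model_bracket (gs_lam g) (gs_alpha g) (gs_beta g) (gs_gamma g) x y)" for x y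
    unfolding gs_lam_def gs_alpha_def gs_beta_def gs_gamma_def
    by (rule bracket_triangular_frame[where p = "g (Zb 1) (gs_e2 g)" and q = "g (Zb 1) (gs_e3 g)"
          and r = "g (Zb 1) (gs_e4 g)", OF g_norm_pos[OF gs_residual_nonzero(3)]
          g_norm_pos[OF Zb_nonzero] g_norm_pos[OF gs_residual_nonzero(1)]
          g_norm_pos[OF gs_residual_nonzero(2)]])
      (simp_all only: gs_e1_def gs_e2_def gs_e3_def gs_e4_def g_unit_def
        gs_r3_def gs_r4_def gs_r1_def)
qed (simp_all add: gs_orthonormal gs_expansion[symmetric])

sublocale gs: adapted_frame g "gs_e1 g" "gs_e2 g" "gs_e3 g" "gs_e4 g"
    "gs_lam g" "gs_alpha g" "gs_beta g" "gs_gamma g"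
  by (rule gs_adapted_frame)

lemma gs_lam_pos: "gs_lam g > 0"
  by (simp add: gs_lam_def g_norm_pos gs_residual_nonzero)


lemma derivation_gs_triangular:
  assumes "is_derivation D"
  shows "g (D *v gs_e2 g) (gs_e3 g) = 0" "g (D *v gs_e2 g) (gs_e4 g) = 0" "g (D *v gs_e3 g) (gs_e4 g) = 0"
proof -
  note eigen = derivation_eigenvectors[OF assms]
  have De2: "D *v gs_e2 g = D$2$2 *s gs_e2 g"
    by (simp add: gs_e2_def g_unit_def vector_scalar_commute eigen vector_smult_assoc mult.commute)
  have De3: "D *v gs_e3 g = complex_of_real (1 / g_norm g (gs_r3 g)) *s
      (D$3$3 *s Zb 3 - g (Zb 3) (gs_e2 g) *s (D$2$2 *s gs_e2 g))"
    by (simp add: gs_e3_def g_unit_def gs_r3_def vector_scalar_commute eigen De2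
        matrix_vector_mult_diff_distrib)
  have "g (Zb 3) (gs_e4 g) = 0"
    by (subst Zb_in_gs_frame) (simp add: sesqui_simps gs.orthonormal_all)
  then show "g (D *v gs_e2 g) (gs_e3 g) = 0" "g (D *v gs_e2 g) (gs_e4 g) = 0" "g (D *v gs_e3 g) (gs_e4 g) = 0"
    by (simp_all add: De2 De3 sesqui_simps gs.orthonormal_all)
qed

lemma soliton_form_vanishes:
  assumes adj: "\<And>X Y. g (D *v X) Y = g X (Dt *v Y)"
    and "g a b = 0" "g (D *v b) a = 0" "g (Dt *v b) a = 0"
  shows "g (complex_of_real c *s a + (1/2 :: complex) *s (D *v a + Dt *v a)) b = 0"
proof -
  have "g (D *v a) b = 0"
    using adj[of a b] conj_sym[of a "Dt *v b"] assms(4) by simp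
  moreover have "g (Dt *v a) b = 0"
    using adj[of b a] conj_sym[of "Dt *v a" b] assms(3) by simp
  ultimately show ?thesis
    using assms(2) by (simp add: sesqui_simps)
qed

lemma soliton_imp_gs_params_zero:
  assumes "hcf_expanding_soliton g"
  shows "gs_alpha g = 0 \<and> gs_beta g = 0 \<and> gs_gamma g = 0"
proof -
  obtain c D Dt where D: "is_derivation D" "is_derivation Dt"
    and adj: "\<And>X Y. g (D *v X) Y = g X (Dt *v Y)"
    and K: "\<And>X Y. Khcf g X Y = g (complex_of_real c *s X + (1/2 :: complex) *s (D *v X + Dt *v X)) Y"
    using assms unfolding hcf_expanding_soliton_def by blast
  note tri = derivation_gs_triangular[OF D(1)] derivation_gs_triangular[OF D(2)]
  have "Khcf g (gs_e4 g) (gs_e2 g) = 0" "Khcf g (gs_e4 g) (gs_e3 g) = 0" "Khcf g (gs_e3 g) (gs_e2 g) = 0"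
    unfolding K by (rule soliton_form_vanishes[OF adj]; simp add: tri gs.orthonormal_all)+
  then show ?thesis
    using gs_lam_pos by (auto simp: gs.Khcf_frame_basis)
qed

lemma gs_params_zero_iff:
  "gs_alpha g = 0 \<and> gs_beta g = 0 \<and> gs_gamma g = 0 \<longleftrightarrow>
     g (Zb 2) (Zb 3) = 0 \<and> g (Zb 2) (Zb 4) = 0 \<and> g (Zb 3) (Zb 4) = 0"
proof -
  define t where "t = g (Zb 3) (gs_e2 g)"
  define u where "u = g (Zb 4) (gs_e2 g)"
  define v where "v = g (Zb 4) (gs_e3 g)"
  have pos: "gs_lam g > 0" "g_norm g (Zb 2) > 0" "g_norm g (gs_r3 g) > 0" "g_norm g (gs_r4 g) > 0"
    by (simp_all add: gs_lam_pos g_norm_pos gs_residual_nonzero Zb_nonzero)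
  have t: "t = complex_of_real (1 / g_norm g (Zb 2)) * cnj (g (Zb 2) (Zb 3))"
    and u: "u = complex_of_real (1 / g_norm g (Zb 2)) * cnj (g (Zb 2) (Zb 4))"
    unfolding t_def u_def gs_e2_def g_unit_def
    by (simp_all add: scale_right conj_sym[of "Zb 3"] conj_sym[of "Zb 4"])
  have v: "v = complex_of_real (1 / g_norm g (gs_r3 g)) * (cnj (g (Zb 3) (Zb 4)) - cnj t * u)"
    unfolding v_def t_def u_def gs_e3_def g_unit_def gs_r3_def
    by (simp add: sesqui_simps conj_sym[of "Zb 4" "Zb 3"] diff_divide_distrib)
  have "gs_alpha g = 0 \<longleftrightarrow> t = 0" "gs_gamma g = 0 \<longleftrightarrow> v = 0"
    using pos by (simp_all add: gs_alpha_def gs_gamma_def t_def v_def)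
  moreover have "v = 0 \<Longrightarrow> gs_beta g = 0 \<longleftrightarrow> u = 0"
    using pos by (simp add: gs_beta_def u_def v_def)
  moreover have "t = 0 \<and> u = 0 \<and> v = 0 \<longleftrightarrow>
      g (Zb 2) (Zb 3) = 0 \<and> g (Zb 2) (Zb 4) = 0 \<and> g (Zb 3) (Zb 4) = 0"
    using pos by (auto simp: t u v)
  ultimately show ?thesis
    by blast
qed

end

theorem proposition4p1:
  fixes g :: "alg \<Rightarrow> alg \<Rightarrow> complex"
  assumes "herm_ip g"
  shows "hcf_expanding_soliton g \<longleftrightarrow>
           (g (Zb 2) (Zb 3) = 0 \<and> g (Zb 2) (Zb 4) = 0 \<and> g (Zb 3) (Zb 4) = 0)"
proof -
  interpret hermitian_form g
    using assms by unfold_locales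
  have "gs_lam g \<noteq> 0"
    using gs_lam_pos by simp
  then show ?thesis
    using soliton_imp_gs_params_zero gs.diagonal_frame_soliton gs_params_zero_iff by blast
qed

end
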